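(* The subvariety $\mathcal S\subseteq\mathscr X_2$ is a rational section for the action of $G=\mathrm{SO}_3(\mathbb C)\times\mathrm{SO}_3(\mathbb C)$ on $\mathscr X_2$.
   Context: Two-qubit setting in coordinates: identify $V_1=V_2=\mathbb C^2$ and use the Pauli matrices $\sigma_1=\begin{pmatrix}0&1\\1&0\end{pmatrix}$, $\sigma_2=\begin{pmatrix}0&-i\\i&0\end{pmatrix}$, $\sigma_3=\begin{pmatrix}1&0\\0&-1\end{pmatrix}$. Every trace-one endomorphism $\rho$ of $\mathbb C^2\otimes\mathbb C^2$ (L-state) is uniquely $\rho=\tfrac14\big(I\otimes I+\sum_a v_a\sigma_a\otimes I+\sum_b w_bI\otimes\sigma_b+\sum_{a,b}C_{ba}\sigma_a\otimes\sigma_b\big)$, giving coordinates $(v,w,C)\in\mathbb C^3\times\mathbb C^3\times M_3(\mathbb C)$ on the space $\mathscr L_2$ of L-states. The group $G=\mathrm{SO}_3(\mathbb C)\times\mathrm{SO}_3(\mathbb C)$ ($\cong\mathrm{PGL}_2(\mathbb C)^2$ acting by conjugation) acts by $(g_1,g_2)\cdot(v,w,C)=(g_1v,g_2w,g_2Cg_1^{-1})$. Let $X_0\subseteq\mathscr L_2$ be the linear subspace of $(v,w,C)$ with $v_1=v_2=w_1=w_2=0$ and $C_{ba}=0$ whenever exactly one of $a,b$ equals $3$. The variety of X-states $\mathscr X_2$ is the Zariski closure of $G\cdot X_0$ with reduced structure (equivalently, the Zariski closure of the set of X-states: L-states that, for some choice of bases of the two qubits, are block-diagonal with respect to the even/odd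 parity splitting of the tensor basis). Let $\mathcal S\cong\mathbb C\times\mathbb C\times\mathbb C^3$ be embedded in $\mathscr X_2$ by $(x,y,\lambda)\mapsto(v,w,C)=((0,0,x),(0,0,y),\operatorname{diag}(\lambda_1,\lambda_2,\lambda_3))$. For a group $G$ acting on a variety $X$, a subvariety $\mathcal S$ with normalizer $N=\{g: g\mathcal S\subseteq\mathcal S\}$ is a rational section if there is a dense open $\mathcal S_0\subseteq\mathcal S$ with $\overline{G\mathcal S}=X$ and such that every $g\in G$ with $g\mathcal S_0\cap\mathcal S_0\ne\emptyset$ lies in $N$. *)

theory Defs
  imports "HOL-Analysis.Analysis"
begin

text \<open>L-states of two qubits in coordinates (v, w, C), C indexed as C $ b $ a = C_{ba}.
The index type 3 has elements 1, 2, 3 (with 3 = 0 in the numeral type).\<close>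

type_synonym lstate = "(complex^3) \<times> (complex^3) \<times> (complex^3^3)"

inductive_set lpoly :: "(lstate \<Rightarrow> complex) set" where
  coord_v: "(\<lambda>(v,w,C). v $ i) \<in> lpoly"
| coord_w: "(\<lambda>(v,w,C). w $ i) \<in> lpoly"
| coord_C: "(\<lambda>(v,w,C). C $ i $ j) \<in> lpoly"
| const: "(\<lambda>_. c) \<in> lpoly"
| add: "p \<in> lpoly \<Longrightarrow> q \<in> lpoly \<Longrightarrow> (\<lambda>x. p x + q x) \<in> lpoly"
| mult: "p \<in> lpoly \<Longrightarrow> q \<in> lpoly \<Longrightarrow> (\<lambda>x. p x * q x) \<in> lpoly"

definition zariski :: "lstate topology" where
  "zariski = topology_generated_by {{x. p x \<noteq> 0} | p. p \<in> lpoly}"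

definition SO3 :: "(complex^3^3) set" where
  "SO3 = {g. transpose g ** g = mat 1 \<and> det g = 1}"

definition Ggrp :: "((complex^3^3) \<times> (complex^3^3)) set" where
  "Ggrp = SO3 \<times> SO3"

definition act :: "((complex^3^3) \<times> (complex^3^3)) \<Rightarrow> lstate \<Rightarrow> lstate" where
  "act g x = (case g of (g1, g2) \<Rightarrow> case x of (v, w, C) \<Rightarrow>
      (g1 *v v, g2 *v w, g2 ** C ** matrix_inv g1))"

definition X0 :: "lstate set" where
  "X0 = {(v, w, C). v $ 1 = 0 \<and> v $ 2 = 0 \<and> w $ 1 = 0 \<and> w $ 2 = 0 \<and>
         (\<forall>a b :: 3. (a = 3) \<noteq> (b = 3) \<longrightarrow> C $ b $ a = 0)}"

definition Xvar :: "lstate set" where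
  "Xvar = zariski closure_of (\<Union>g\<in>Ggrp. act g ` X0)"

definition embS :: "complex \<Rightarrow> complex \<Rightarrow> complex^3 \<Rightarrow> lstate" where
  "embS x y l = ((\<chi> i. if i = 3 then x else 0), (\<chi> i. if i = 3 then y else 0),
                 (\<chi> b a. if a = b then l $ a else 0))"

definition Ssec :: "lstate set" where
  "Ssec = {embS x y l | x y l. True}"

definition normalizer :: "lstate set \<Rightarrow> ((complex^3^3) \<times> (complex^3^3)) set" where
  "normalizer S = {g \<in> Ggrp. act g ` S \<subseteq> S}"

definition rational_section :: "lstate set \<Rightarrow> lstate set \<Rightarrow> bool" where
  "rational_section X S \<longleftrightarrow>
     (\<exists>S0. S0 \<subseteq> S \<and> openin (subtopology zariski S) S0 \<and> S \<subseteq> zariski closure_of S0 \<and>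
          zariski closure_of (\<Union>g\<in>Ggrp. act g ` S) = X \<and>
          (\<forall>g\<in>Ggrp. act g ` S0 \<inter> S0 \<noteq> {} \<longrightarrow> g \<in> normalizer S))"

end

theory Submission
  imports Defs "HOL-Computational_Algebra.Polynomial"
begin

text \<open>
  If the upper left \<open>2 \<times> 2\<close> block of \<open>C\<close> is generic, a point \<open>(v, w, C)\<close> of \<open>X0\<close> is
  \<open>(R(t\<^sub>1), R(t\<^sub>2)) \<cdot> s\<close> with \<open>s \<in> S\<close> and \<open>R(t)\<close> the rotation about the third axis by a complex
  angle: this is a complex singular value decomposition of the block. A small perturbation of
  \<open>C\<^sub>1\<^sub>1\<close> makes the block generic, so \<open>G \<cdot> S\<close> is dense in \<open>G \<cdot> X0\<close> already for the Euclidean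
  topology, which is finer than the Zariski topology.

  For \<open>S\<^sub>0\<close> take the points of \<open>S\<close> with \<open>x y \<noteq> 0\<close> and pairwise distinct \<open>\<lambda>\<^sub>i\<^sup>2\<close>. If
  \<open>g = (A, B)\<close> maps such a point into \<open>S\<^sub>0\<close>, then \<open>A\<close> and \<open>B\<close> fix the third axis and
  \<open>B diag(\<lambda>) A\<^sup>T = diag(\<lambda>')\<close>. Orthogonality makes both \<open>A\<close> and \<open>B\<close> intertwine
  \<open>diag(\<lambda>\<^sup>2)\<close> with \<open>diag(\<lambda>'\<^sup>2)\<close>, so \<open>B\<^sub>i\<^sub>j A\<^sub>k\<^sub>j = 0\<close> for \<open>i \<noteq> k\<close>, and therefore
  \<open>B diag(\<mu>) A\<^sup>T\<close> is diagonal for every \<open>\<mu>\<close>: the element \<open>g\<close> maps all of \<open>S\<close> into \<open>S\<close>.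
\<close>

section \<open>Diagonal matrices and coordinate axes\<close>

definition diag_mat :: "'a::zero^'n \<Rightarrow> 'a^'n^'n" where
  "diag_mat l = (\<chi> i j. if i = j then l $ i else 0)"

lemma matrix_mul_diag_mat_nth:
  fixes M :: "'a::semiring_1^'n^'m"
  shows "(M ** diag_mat l) $ i $ j = M $ i $ j * l $ j"
  by (simp add: matrix_matrix_mult_def diag_mat_def if_distrib[of "\<lambda>x. _ * x"] cong: if_cong)

lemma diag_mat_mul_nth:
  fixes M :: "'a::semiring_1^'n^'m"
  shows "(diag_mat l ** M) $ i $ j = l $ i * M $ i $ j"
  by (simp add: matrix_matrix_mult_def diag_mat_def if_distrib[of "\<lambda>x. x * _"] cong: if_cong)

lemma transpose_diag_mat: "transpose (diag_mat l) = diag_mat l"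
  by (auto simp: vec_eq_iff transpose_def diag_mat_def)

lemma diag_mat_of_offdiag_zero:
  fixes M :: "'a::zero^'n^'n"
  assumes "\<And>i k. i \<noteq> k \<Longrightarrow> M $ i $ k = 0"
  shows "M = diag_mat (\<chi> i. M $ i $ i)"
  using assms by (auto simp: vec_eq_iff diag_mat_def)

lemma diag_mat_intertwining_square:
  fixes A B :: "'a::comm_semiring_1^'n^'n"
  assumes "B ** diag_mat l = diag_mat l' ** A" and "A ** diag_mat l = diag_mat l' ** B"
  shows "B $ i $ j * (l $ j)\<^sup>2 = (l' $ i)\<^sup>2 * B $ i $ j"
proof -
  have "B ** diag_mat l ** diag_mat l = diag_mat l' ** (A ** diag_mat l)"
    by (metis assms(1) matrix_mul_assoc)
  also have "\<dots> = diag_mat l' ** (diag_mat l' ** B)"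
    by (simp add: assms(2))
  finally have "(B ** diag_mat l ** diag_mat l) $ i $ j = (diag_mat l' ** (diag_mat l' ** B)) $ i $ j"
    by simp
  then show ?thesis
    by (simp add: matrix_mul_diag_mat_nth diag_mat_mul_nth power2_eq_square mult_ac)
qed

lemma orthogonal_conj_diag_mat_offdiag:
  fixes A B :: "'a::field^'n^'n"
  assumes A: "transpose A ** A = mat 1" and B: "transpose B ** B = mat 1"
    and conj: "B ** diag_mat l ** transpose A = diag_mat l'"
    and distinct: "\<And>i k. i \<noteq> k \<Longrightarrow> (l' $ i)\<^sup>2 \<noteq> (l' $ k)\<^sup>2"
    and "i \<noteq> k"
  shows "(B ** diag_mat m ** transpose A) $ i $ k = 0"
proof -
  have BA: "B ** diag_mat l = diag_mat l' ** A"
    by (metis conj A matrix_mul_assoc matrix_mul_rid)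
  have "A ** diag_mat l ** transpose B = diag_mat l'"
    using arg_cong[OF conj, of transpose]
    by (simp add: matrix_transpose_mul transpose_diag_mat matrix_mul_assoc)
  then have AB: "A ** diag_mat l = diag_mat l' ** B"
    by (metis B matrix_mul_assoc matrix_mul_rid)
  have orth: "B $ i $ j * A $ k $ j = 0" for j
  proof (rule ccontr)
    assume "B $ i $ j * A $ k $ j \<noteq> 0"
    then have "(l' $ i)\<^sup>2 = (l $ j)\<^sup>2" "(l' $ k)\<^sup>2 = (l $ j)\<^sup>2"
      using diag_mat_intertwining_square[OF BA AB, of i j]
        diag_mat_intertwining_square[OF AB BA, of k j] by (auto simp: mult.commute)
    then show False using distinct[OF \<open>i \<noteq> k\<close>] by simp
  qed
  moreover have "(B ** diag_mat m ** transpose A) $ i $ k = (\<Sum>j\<in>UNIV. B $ i $ j * A $ k $ j * m $ j)"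
    by (simp add: matrix_matrix_mult_def[of "B ** diag_mat m"] matrix_mul_diag_mat_nth
        transpose_def mult_ac)
  ultimately show ?thesis
    using orth by (auto intro!: sum.neutral)
qed

lemma axis_nth_if: "axis k x $ i = (if i = k then x else 0)"
  by (simp add: axis_def)

lemma matrix_vector_mult_axis_nth:
  fixes A :: "'a::semiring_1^'n^'m"
  shows "(A *v axis k x) $ i = A $ i $ k * x"
  by (simp add: matrix_vector_mult_def axis_def if_distrib[of "\<lambda>y. _ * y"] cong: if_cong)

lemma matrix_vector_mult_axis:
  fixes A :: "'a::semiring_1^'n^'n"
  assumes "\<And>i. i \<noteq> k \<Longrightarrow> A $ i $ k = 0"
  shows "A *v axis k x = axis k (A $ k $ k * x)"
proof (rule vec_eq_iff[THEN iffD2, rule_format])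
  fix i
  show "(A *v axis k x) $ i = axis k (A $ k $ k * x) $ i"
    by (cases "i = k") (simp_all add: matrix_vector_mult_axis_nth axis_nth_if assms)
qed

lemma mult_axis_eq_axis_imp_nth_zero:
  fixes A :: "'a::{semiring_1,semiring_no_zero_divisors}^'n^'n"
  assumes "A *v axis k x = axis k x'" and "x \<noteq> 0" and "i \<noteq> k"
  shows "A $ i $ k = 0"
proof -
  have "A $ i $ k * x = 0"
    using arg_cong[OF assms(1), of "\<lambda>v. v $ i"] assms(3)
    by (simp add: matrix_vector_mult_axis_nth axis_nth_if)
  then show ?thesis using assms(2) by simp
qed

lemma continuous_on_mem_closure_cofinite:
  fixes f :: "'a::{real_normed_vector,perfect_space} \<Rightarrow> 'b::topological_space"
  assumes "continuous_on UNIV f" and "finite B" and "\<And>t. t \<notin> B \<Longrightarrow> f t \<in> A"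
  shows "f t \<in> closure A"
proof -
  have "closure (- B) = UNIV"
    using empty_interior_finite[OF assms(2)] by (simp add: closure_complement)
  then have "f t \<in> f ` closure (- B)" by simp
  also have "\<dots> \<subseteq> closure A"
  proof (rule image_closure_subset)
    show "continuous_on (closure (- B)) f"
      using assms(1) continuous_on_subset by blast
    show "f ` (- B) \<subseteq> closure A"
      using assms(3) closure_subset by blast
  qed simp
  finally show ?thesis .
qed

lemma finite_square_eq_square_linear:
  fixes a b c d :: "'a::idom"
  assumes "c\<^sup>2 \<noteq> d\<^sup>2"
  shows "finite {t. (a + c * t)\<^sup>2 = (b + d * t)\<^sup>2}"
proof -
  let ?p = "[:a\<^sup>2 - b\<^sup>2, 2 * (a * c - b * d), c\<^sup>2 - d\<^sup>2:]"
  have "?p \<noteq> 0" using assms by auto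
  then have "finite {t. poly ?p t = 0}" by (rule poly_roots_finite)
  moreover have "(a + c * t)\<^sup>2 = (b + d * t)\<^sup>2 \<longleftrightarrow> poly ?p t = 0" for t
    by (subst eq_iff_diff_eq_0) (simp add: algebra_simps power2_eq_square)
  ultimately show ?thesis by simp
qed

lemma finite_sum_square_eq_zero:
  fixes u v :: complex
  shows "finite {t. (u + t)\<^sup>2 + v\<^sup>2 = 0}"
proof -
  have "(u + t)\<^sup>2 + v\<^sup>2 = 0 \<longleftrightarrow> (u + 1 * t)\<^sup>2 = (\<i> * v + 0 * t)\<^sup>2" for t
    by (simp add: power_mult_distrib eq_neg_iff_add_eq_0)
  then show ?thesis
    using finite_square_eq_square_linear[of 1 0 u "\<i> * v"] by simp
qed

section \<open>The Zariski topology\<close>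

lemma lpoly_continuous_on: "p \<in> lpoly \<Longrightarrow> continuous_on UNIV p"
  by (induction rule: lpoly.induct) (auto intro!: continuous_intros simp: case_prod_beta)

lemma openin_zariski_imp_open: "openin zariski U \<Longrightarrow> open U"
  unfolding zariski_def openin_topology_generated_by_iff
proof (induction rule: generate_topology_on.induct)
  case (Basis s)
  then obtain p where "p \<in> lpoly" "s = {x. p x \<noteq> 0}" by auto
  then show ?case
    using lpoly_continuous_on open_Collect_neq[of p "\<lambda>_. 0"] by (auto intro: continuous_intros)
qed auto

lemma topspace_zariski: "topspace zariski = UNIV"
proof -
  have "UNIV \<in> {{x. p x \<noteq> 0} |p. p \<in> lpoly}"
    using lpoly.const[of 1] by (auto intro!: exI[of _ "\<lambda>_. 1"])
  then show ?thesis
    unfolding zariski_def topology_generated_by_topspace by blast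
qed

lemma closure_subset_zariski_closure: "closure A \<subseteq> zariski closure_of A"
proof -
  have "continuous_map euclidean zariski id"
    using topology_finer_continuous_id[of zariski euclidean] topspace_zariski openin_zariski_imp_open
    by auto
  then show ?thesis
    using continuous_map_image_closure_subset[of euclidean zariski id A] by simp
qed

lemma lpoly_diff: "p \<in> lpoly \<Longrightarrow> q \<in> lpoly \<Longrightarrow> (\<lambda>x. p x - q x) \<in> lpoly"
  using lpoly.add[of p "\<lambda>x. - 1 * q x"] lpoly.mult[OF lpoly.const[of "- 1"]] by simp

lemma lpoly_power: "p \<in> lpoly \<Longrightarrow> (\<lambda>x. p x ^ n) \<in> lpoly"
  by (induction n) (simp_all add: lpoly.const lpoly.mult)

lemma lpoly_coord_fst: "(\<lambda>z. fst z $ i) \<in> lpoly"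
  using lpoly.coord_v[of i] by (simp add: case_prod_unfold)

lemma lpoly_coord_fst_snd: "(\<lambda>z. fst (snd z) $ i) \<in> lpoly"
  using lpoly.coord_w[of i] by (simp add: case_prod_unfold)

lemma lpoly_coord_snd_snd: "(\<lambda>z. snd (snd z) $ i $ j) \<in> lpoly"
  using lpoly.coord_C[of i j] by (simp add: case_prod_unfold)

section \<open>The action of SO(3) x SO(3)\<close>

lemma matrix_inv_orthogonal:
  fixes g :: "'a::field^'n^'n"
  assumes "transpose g ** g = mat 1"
  shows "matrix_inv g = transpose g"
proof -
  have right: "g ** transpose g = mat 1"
    using assms matrix_left_right_inverse by blast
  have "g ** matrix_inv g = mat 1 \<and> matrix_inv g ** g = mat 1"
    unfolding matrix_inv_def by (rule someI[of _ "transpose g"]) (use assms right in auto)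
  then have "matrix_inv g = matrix_inv g ** (g ** transpose g)"
    and "matrix_inv g ** g = mat 1"
    using right by (simp_all add: matrix_mul_rid)
  then show ?thesis by (simp add: matrix_mul_assoc matrix_mul_lid)
qed

lemma SO3_mult: "g \<in> SO3 \<Longrightarrow> h \<in> SO3 \<Longrightarrow> g ** h \<in> SO3"
  unfolding SO3_def
  by (auto simp: matrix_transpose_mul det_mul matrix_mul_assoc) (metis matrix_mul_assoc matrix_mul_lid)

lemma act_SO3:
  "g1 \<in> SO3 \<Longrightarrow> act (g1, g2) (v, w, C) = (g1 *v v, g2 *v w, g2 ** C ** transpose g1)"
  by (simp add: act_def SO3_def matrix_inv_orthogonal)

lemma Ggrp_mult: "g \<in> Ggrp \<Longrightarrow> h \<in> Ggrp \<Longrightarrow> (fst g ** fst h, snd g ** snd h) \<in> Ggrp"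
  by (auto simp: Ggrp_def SO3_mult)

lemma act_act:
  "g \<in> Ggrp \<Longrightarrow> h \<in> Ggrp \<Longrightarrow> act g (act h x) = act (fst g ** fst h, snd g ** snd h) x"
  by (cases g; cases h; cases x)
    (auto simp: Ggrp_def act_SO3 SO3_mult matrix_vector_mul_assoc matrix_transpose_mul
      matrix_mul_assoc)

lemma continuous_on_act: "g \<in> Ggrp \<Longrightarrow> continuous_on UNIV (act g)"
proof -
  assume "g \<in> Ggrp"
  then obtain g1 g2 where g: "g = (g1, g2)" "g1 \<in> SO3" by (cases g) (auto simp: Ggrp_def)
  have "act g = (\<lambda>x. (g1 *v fst x, g2 *v fst (snd x), g2 ** snd (snd x) ** transpose g1))"
    by (auto simp: g act_SO3)
  moreover have "continuous_on UNIV \<dots>"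
    unfolding matrix_vector_mult_def matrix_matrix_mult_def by (intro continuous_intros)
  ultimately show ?thesis by simp
qed

abbreviation G_orbits :: "lstate set \<Rightarrow> lstate set" where
  "G_orbits A \<equiv> \<Union>g\<in>Ggrp. act g ` A"

lemma act_G_orbits_subset:
  assumes g: "g \<in> Ggrp"
  shows "act g ` G_orbits A \<subseteq> G_orbits A"
proof
  fix z assume "z \<in> act g ` G_orbits A"
  then obtain h a where h: "h \<in> Ggrp" and "a \<in> A" and z: "z = act g (act h a)" by blast
  then have "act (fst g ** fst h, snd g ** snd h) a \<in> G_orbits A"
    using Ggrp_mult[OF g h] by blast
  then show "z \<in> G_orbits A" by (simp add: z act_act[OF g h])
qed

lemma act_closure_G_orbits_subset:
  assumes "g \<in> Ggrp"
  shows "act g ` closure (G_orbits A) \<subseteq> closure (G_orbits A)"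
proof (rule image_closure_subset)
  show "continuous_on (closure (G_orbits A)) (act g)"
    by (rule continuous_on_subset[OF continuous_on_act[OF assms]]) simp
  show "act g ` G_orbits A \<subseteq> closure (G_orbits A)"
    using act_G_orbits_subset[OF assms] closure_subset by (rule order_trans)
qed simp

lemma G_orbits_subset_closure:
  assumes "A \<subseteq> closure (G_orbits B)"
  shows "G_orbits A \<subseteq> closure (G_orbits B)"
proof
  fix z assume "z \<in> G_orbits A"
  then obtain g a where g: "g \<in> Ggrp" and "a \<in> A" and z: "z = act g a" by blast
  then have "a \<in> closure (G_orbits B)" using assms by blast
  then show "z \<in> closure (G_orbits B)"
    using act_closure_G_orbits_subset[OF g, of B] z by blast
qed

lemma embS_eq: "embS x y l = (axis 3 x, axis 3 y, diag_mat l)"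
  by (auto simp: embS_def axis_def diag_mat_def vec_eq_iff)

lemma continuous_on_embS:
  assumes "continuous_on S f" "continuous_on S g" "continuous_on S h"
  shows "continuous_on S (\<lambda>t. embS (f t) (g t) (h t))"
  unfolding embS_def
proof (intro continuous_on_Pair continuous_on_vec_lambda)
  fix i j :: 3
  show "continuous_on S (\<lambda>t. if i = 3 then f t else 0)"
    "continuous_on S (\<lambda>t. if i = 3 then g t else 0)"
    "continuous_on S (\<lambda>t. if j = i then h t $ j else 0)"
    using assms by (cases "i = 3"; cases "j = i"; simp add: continuous_intros)+
qed

definition rot3 :: "complex \<Rightarrow> complex^3^3" where
  "rot3 t = vector [vector [cos t, - sin t, 0], vector [sin t, cos t, 0], vector [0, 0, 1]]"

lemma rot3_nth:
  "rot3 t $ 1 $ 1 = cos t" "rot3 t $ 1 $ 2 = - sin t" "rot3 t $ 1 $ 3 = 0"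
  "rot3 t $ 2 $ 1 = sin t" "rot3 t $ 2 $ 2 = cos t" "rot3 t $ 2 $ 3 = 0"
  "rot3 t $ 3 $ 1 = 0" "rot3 t $ 3 $ 2 = 0" "rot3 t $ 3 $ 3 = 1"
  by (simp_all add: rot3_def)

lemma rot3_SO3: "rot3 t \<in> SO3"
  unfolding SO3_def
  by (auto simp: vec_eq_iff forall_3 matrix_matrix_mult_def sum_3 rot3_nth det_3 mat_def
      transpose_def algebra_simps power2_eq_square[symmetric])

lemma rot3_mult_axis3: "rot3 t *v axis 3 x = axis 3 x"
proof -
  have "rot3 t $ i $ 3 = 0" if "i \<noteq> 3" for i
    using that exhaust_3[of i] by (auto simp: rot3_nth)
  then show ?thesis by (simp add: matrix_vector_mult_axis rot3_nth)
qed

section \<open>Density of the orbits of the section\<close>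

lemma complex_cos_sin_scale:
  fixes u v :: complex
  assumes "u\<^sup>2 + v\<^sup>2 \<noteq> 0"
  shows "\<exists>P a. u = P * cos a \<and> v = P * sin a"
proof -
  define P where "P = csqrt (u\<^sup>2 + v\<^sup>2)"
  have P2: "P\<^sup>2 = u\<^sup>2 + v\<^sup>2" unfolding P_def by simp
  have P0: "P \<noteq> 0" using assms P2 by auto
  have factor: "(u + \<i> * v) * (u - \<i> * v) = u\<^sup>2 + v\<^sup>2"
    by (simp add: algebra_simps power2_eq_square)
  have nz: "u + \<i> * v \<noteq> 0" using factor assms by auto
  define a where "a = - \<i> * Ln ((u + \<i> * v) / P)"
  have exp_pos: "exp (\<i> * a) = (u + \<i> * v) / P"
    using nz P0 by (simp add: a_def exp_Ln)
  have exp_neg: "exp (- (\<i> * a)) = (u - \<i> * v) / P"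
    using nz P0 factor P2 by (simp add: exp_minus exp_pos field_simps power2_eq_square)
  have "cos a = u / P" "sin a = v / P"
    unfolding cos_exp_eq sin_exp_eq exp_pos exp_neg using P0 by (simp_all add: field_simps)
  then show ?thesis using P0 by (intro exI[of _ P] exI[of _ a]) auto
qed

text \<open>With \<open>a = t\<^sub>2 - t\<^sub>1\<close> and \<open>b = t\<^sub>2 + t\<^sub>1\<close>, the upper left block of
  \<open>rot3 t\<^sub>2 ** diag_mat l ** transpose (rot3 t\<^sub>1)\<close> has
  \<open>(M\<^sub>1\<^sub>1 + M\<^sub>2\<^sub>2, M\<^sub>2\<^sub>1 - M\<^sub>1\<^sub>2) = (l\<^sub>1 + l\<^sub>2) (cos a, sin a)\<close> and
  \<open>(M\<^sub>1\<^sub>1 - M\<^sub>2\<^sub>2, M\<^sub>1\<^sub>2 + M\<^sub>2\<^sub>1) = (l\<^sub>1 - l\<^sub>2) (cos b, sin b)\<close>.\<close>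

lemma rot3_diag_rot3_decomposition:
  fixes M :: "complex^3^3"
  assumes zero: "M$1$3 = 0" "M$2$3 = 0" "M$3$1 = 0" "M$3$2 = 0"
    and sum_nz: "(M$1$1 + M$2$2)\<^sup>2 + (M$2$1 - M$1$2)\<^sup>2 \<noteq> 0"
    and diff_nz: "(M$1$1 - M$2$2)\<^sup>2 + (M$1$2 + M$2$1)\<^sup>2 \<noteq> 0"
  shows "\<exists>t1 t2 l. M = rot3 t2 ** diag_mat l ** transpose (rot3 t1)"
proof -
  obtain P a where a: "M$1$1 + M$2$2 = P * cos a" "M$2$1 - M$1$2 = P * sin a"
    using complex_cos_sin_scale[OF sum_nz] by blast
  obtain Q b where b: "M$1$1 - M$2$2 = Q * cos b" "M$1$2 + M$2$1 = Q * sin b"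
    using complex_cos_sin_scale[OF diff_nz] by blast
  define t1 where "t1 = (b - a) / 2"
  define t2 where "t2 = (a + b) / 2"
  have ab: "a = t2 - t1" "b = t2 + t1" unfolding t1_def t2_def by (simp_all add: field_simps)
  have M: "M$1$1 = (P * cos a + Q * cos b) / 2" "M$2$2 = (P * cos a - Q * cos b) / 2"
    "M$2$1 = (P * sin a + Q * sin b) / 2" "M$1$2 = (Q * sin b - P * sin a) / 2"
    using a b by algebra+
  have "M = rot3 t2 ** diag_mat (vector [(P + Q) / 2, (P - Q) / 2, M$3$3]) ** transpose (rot3 t1)"
    unfolding vec_eq_iff forall_3 matrix_matrix_mult_def sum_3
    by (simp add: rot3_nth transpose_def diag_mat_def zero, simp only: M ab cos_add sin_add
        cos_diff sin_diff, simp add: field_simps)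
  then show ?thesis by blast
qed

lemma X0_generic_in_G_orbits:
  assumes X0: "(v, w, C) \<in> X0"
    and sum_nz: "(C$1$1 + C$2$2)\<^sup>2 + (C$2$1 - C$1$2)\<^sup>2 \<noteq> 0"
    and diff_nz: "(C$1$1 - C$2$2)\<^sup>2 + (C$1$2 + C$2$1)\<^sup>2 \<noteq> 0"
  shows "(v, w, C) \<in> G_orbits Ssec"
proof -
  have zero: "v$1 = 0" "v$2 = 0" "w$1 = 0" "w$2 = 0" "C$1$3 = 0" "C$2$3 = 0" "C$3$1 = 0" "C$3$2 = 0"
    using X0 by (auto simp: X0_def)
  then have axis: "axis 3 (v$3) = v" "axis 3 (w$3) = w"
    by (auto simp: vec_eq_iff forall_3 axis_def)
  obtain t1 t2 l where C: "C = rot3 t2 ** diag_mat l ** transpose (rot3 t1)"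
    using rot3_diag_rot3_decomposition[OF zero(5-8) sum_nz diff_nz] by blast
  have "act (rot3 t1, rot3 t2) (embS (v$3) (w$3) l) = (axis 3 (v$3), axis 3 (w$3), C)"
    by (simp add: embS_eq act_SO3 rot3_SO3 rot3_mult_axis3 C)
  then have "act (rot3 t1, rot3 t2) (embS (v$3) (w$3) l) = (v, w, C)"
    by (simp only: axis)
  moreover have "(rot3 t1, rot3 t2) \<in> Ggrp" by (simp add: Ggrp_def rot3_SO3)
  moreover have "embS (v$3) (w$3) l \<in> Ssec" by (auto simp: Ssec_def)
  ultimately show ?thesis by force
qed

lemma X0_subset_closure_G_orbits: "X0 \<subseteq> closure (G_orbits Ssec)"
proof clarify
  fix v w C assume X0: "(v, w, C) \<in> X0"
  define Ct :: "complex \<Rightarrow> complex^3^3"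
    where "Ct t = (\<chi> i j. C$i$j + (if i = 1 \<and> j = 1 then 1 else 0) * t)" for t
  define B where "B = {t. (C$1$1 + C$2$2 + t)\<^sup>2 + (C$2$1 - C$1$2)\<^sup>2 = 0}
    \<union> {t. (C$1$1 - C$2$2 + t)\<^sup>2 + (C$1$2 + C$2$1)\<^sup>2 = 0}"
  have "continuous_on UNIV (\<lambda>t. (v, w, Ct t))"
    unfolding Ct_def by (intro continuous_intros)
  moreover have "finite B" by (simp add: B_def finite_sum_square_eq_zero)
  moreover have "(v, w, Ct t) \<in> G_orbits Ssec" if "t \<notin> B" for t
  proof (rule X0_generic_in_G_orbits)
    show "(v, w, Ct t) \<in> X0" using X0 by (simp add: X0_def Ct_def)
    show "(Ct t$1$1 + Ct t$2$2)\<^sup>2 + (Ct t$2$1 - Ct t$1$2)\<^sup>2 \<noteq> 0"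
      using that by (simp add: B_def Ct_def algebra_simps)
    show "(Ct t$1$1 - Ct t$2$2)\<^sup>2 + (Ct t$1$2 + Ct t$2$1)\<^sup>2 \<noteq> 0"
      using that by (simp add: B_def Ct_def algebra_simps)
  qed
  ultimately have "(v, w, Ct 0) \<in> closure (G_orbits Ssec)"
    by (rule continuous_on_mem_closure_cofinite)
  then show "(v, w, C) \<in> closure (G_orbits Ssec)"
    by (simp add: Ct_def)
qed

lemma Ssec_subset_X0: "Ssec \<subseteq> X0"
  by (auto simp: Ssec_def X0_def embS_def)

lemma zariski_closure_G_orbits_Ssec: "zariski closure_of G_orbits Ssec = Xvar"
proof
  show "zariski closure_of G_orbits Ssec \<subseteq> Xvar"
    unfolding Xvar_def by (rule closure_of_mono) (use Ssec_subset_X0 in blast)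
  have "G_orbits X0 \<subseteq> zariski closure_of G_orbits Ssec"
    using G_orbits_subset_closure[OF X0_subset_closure_G_orbits] closure_subset_zariski_closure
    by blast
  then show "Xvar \<subseteq> zariski closure_of G_orbits Ssec"
    unfolding Xvar_def by (metis closure_of_mono closure_of_closure_of)
qed

section \<open>The generic part of the section\<close>

definition Sgen :: "lstate set" where
  "Sgen = {embS x y l | x y l. x \<noteq> 0 \<and> y \<noteq> 0 \<and>
     (l$1)\<^sup>2 \<noteq> (l$2)\<^sup>2 \<and> (l$1)\<^sup>2 \<noteq> (l$3)\<^sup>2 \<and> (l$2)\<^sup>2 \<noteq> (l$3)\<^sup>2}"

definition Sgen_poly :: "lstate \<Rightarrow> complex" where
  "Sgen_poly = (\<lambda>(v, w, C). v$3 * w$3 * ((C$1$1)\<^sup>2 - (C$2$2)\<^sup>2) *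
     ((C$1$1)\<^sup>2 - (C$3$3)\<^sup>2) * ((C$2$2)\<^sup>2 - (C$3$3)\<^sup>2))"

lemma Sgen_poly_lpoly: "Sgen_poly \<in> lpoly"
  unfolding Sgen_poly_def case_prod_unfold
  by (intro lpoly.mult lpoly_diff lpoly_power lpoly_coord_fst lpoly_coord_fst_snd
      lpoly_coord_snd_snd)

lemma Sgen_eq: "Sgen = {z. Sgen_poly z \<noteq> 0} \<inter> Ssec"
proof -
  have "Sgen_poly (embS x y l) \<noteq> 0 \<longleftrightarrow> x \<noteq> 0 \<and> y \<noteq> 0 \<and>
      (l$1)\<^sup>2 \<noteq> (l$2)\<^sup>2 \<and> (l$1)\<^sup>2 \<noteq> (l$3)\<^sup>2 \<and> (l$2)\<^sup>2 \<noteq> (l$3)\<^sup>2" for x y l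
    by (simp add: Sgen_poly_def embS_def)
  then show ?thesis
    unfolding Sgen_def Ssec_def by blast
qed

lemma openin_Sgen: "openin (subtopology zariski Ssec) Sgen"
proof -
  have "openin zariski {z. Sgen_poly z \<noteq> 0}"
    unfolding zariski_def openin_topology_generated_by_iff
    by (rule generate_topology_on.Basis) (use Sgen_poly_lpoly in blast)
  then show ?thesis
    unfolding openin_subtopology Sgen_eq by blast
qed

lemma Ssec_subset_closure_Sgen: "Ssec \<subseteq> closure Sgen"
proof
  fix s assume "s \<in> Ssec"
  then obtain x y l where s: "s = embS x y l" by (auto simp: Ssec_def)
  \<comment> \<open>the weights 1, 2, 4 have distinct squares, so no condition below holds identically in \<open>t\<close>\<close>
  define h :: "complex \<Rightarrow> complex^3" where "h t = (\<chi> i. l$i + vector [1, 2, 4] $ i * t)" for t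
  have h_nth: "h t $ 1 = l$1 + 1 * t" "h t $ 2 = l$2 + 2 * t" "h t $ 3 = l$3 + 4 * t" for t
    by (simp_all add: h_def)
  define B where "B = {-x, -y} \<union> {t. (l$1 + 1 * t)\<^sup>2 = (l$2 + 2 * t)\<^sup>2}
    \<union> {t. (l$1 + 1 * t)\<^sup>2 = (l$3 + 4 * t)\<^sup>2} \<union> {t. (l$2 + 2 * t)\<^sup>2 = (l$3 + 4 * t)\<^sup>2}"
  have "continuous_on UNIV (\<lambda>t. embS (x + t) (y + t) (h t))"
    unfolding h_def by (intro continuous_on_embS continuous_intros)
  moreover have "finite B"
    unfolding B_def by (intro finite_UnI finite_square_eq_square_linear) simp_all
  moreover have "embS (x + t) (y + t) (h t) \<in> Sgen" if "t \<notin> B" for t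
    using that unfolding Sgen_def B_def
    by (intro CollectI exI conjI refl) (auto simp: h_nth add_eq_0_iff)
  ultimately have "embS (x + 0) (y + 0) (h 0) \<in> closure Sgen"
    by (rule continuous_on_mem_closure_cofinite)
  then show "s \<in> closure Sgen" by (simp add: s h_def)
qed

lemma act_Sgen_meets_imp_normalizer:
  assumes g: "g \<in> Ggrp" and "s \<in> Sgen" and "act g s \<in> Sgen"
  shows "g \<in> normalizer Ssec"
proof -
  obtain A B where gAB: "g = (A, B)" and A: "A \<in> SO3" and B: "B \<in> SO3"
    using g by (auto simp: Ggrp_def)
  obtain x y l where s: "s = embS x y l" and "x \<noteq> 0" "y \<noteq> 0"
    using \<open>s \<in> Sgen\<close> by (auto simp: Sgen_def)
  obtain x' y' l' where gs: "act g s = embS x' y' l'"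
    and l': "(l'$1)\<^sup>2 \<noteq> (l'$2)\<^sup>2" "(l'$1)\<^sup>2 \<noteq> (l'$3)\<^sup>2" "(l'$2)\<^sup>2 \<noteq> (l'$3)\<^sup>2"
    using \<open>act g s \<in> Sgen\<close> by (auto simp: Sgen_def)
  have images: "A *v axis 3 x = axis 3 x'" "B *v axis 3 y = axis 3 y'"
    "B ** diag_mat l ** transpose A = diag_mat l'"
    using gs by (simp_all add: s gAB embS_eq act_SO3[OF A])
  have distinct: "(l' $ i)\<^sup>2 \<noteq> (l' $ k)\<^sup>2" if "i \<noteq> k" for i k :: 3
    using that exhaust_3[of i] exhaust_3[of k] l' l'[symmetric] by auto
  have "act g z \<in> Ssec" if "z \<in> Ssec" for z
  proof -
    obtain x0 y0 m where z: "z = embS x0 y0 m" using \<open>z \<in> Ssec\<close> by (auto simp: Ssec_def)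
    have "B ** diag_mat m ** transpose A = diag_mat (\<chi> i. (B ** diag_mat m ** transpose A) $ i $ i)"
      using orthogonal_conj_diag_mat_offdiag[OF _ _ images(3) distinct] A B
      by (intro diag_mat_of_offdiag_zero) (auto simp: SO3_def)
    moreover have "A *v axis 3 x0 = axis 3 (A $ 3 $ 3 * x0)" "B *v axis 3 y0 = axis 3 (B $ 3 $ 3 * y0)"
      using mult_axis_eq_axis_imp_nth_zero[OF images(1) \<open>x \<noteq> 0\<close>]
        mult_axis_eq_axis_imp_nth_zero[OF images(2) \<open>y \<noteq> 0\<close>]
      by (simp_all add: matrix_vector_mult_axis)
    ultimately have "act g z = embS (A $ 3 $ 3 * x0) (B $ 3 $ 3 * y0)
        (\<chi> i. (B ** diag_mat m ** transpose A) $ i $ i)"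
      unfolding z gAB embS_eq act_SO3[OF A] by simp
    then show ?thesis by (auto simp: Ssec_def)
  qed
  then show ?thesis using g by (auto simp: normalizer_def)
qed

theorem propositionB2:
  shows "rational_section Xvar Ssec"
  unfolding rational_section_def
proof (intro exI[of _ Sgen] conjI ballI impI)
  show "Sgen \<subseteq> Ssec" by (auto simp: Sgen_def Ssec_def)
  show "openin (subtopology zariski Ssec) Sgen" by (rule openin_Sgen)
  show "Ssec \<subseteq> zariski closure_of Sgen"
    using Ssec_subset_closure_Sgen closure_subset_zariski_closure by blast
  show "zariski closure_of G_orbits Ssec = Xvar" by (rule zariski_closure_G_orbits_Ssec)
  fix g assume "g \<in> Ggrp" and "act g ` Sgen \<inter> Sgen \<noteq> {}"
  then show "g \<in> normalizer Ssec" using act_Sgen_meets_imp_normalizer by blast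
qed

end
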